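(* Let $q\in\mathbb{C}^\times$ be not a root of unity, $k\in\mathbb{Z}_{>0}$, $\mathbf{x}=(x_1,\dots,x_k)$, $t\in\mathbb{Z}_{>0}$ and $Q,\beta\in\mathbb{C}^\times$, $\tilde\beta=(q-q^{-1})^{-1}(1-\beta^{-2})$. Then: (i) $p^{\langle Q\rangle}_t(q;\beta)(\mathbf{x})=(-1)^{t-1}q^{-t}[t]e_t(\mathbf{x})+\tilde\beta Q^{-t}+\sum_{z=1}^{t-1}(-1)^{t-z+1}\big(p^{\langle Q\rangle}_z(q;\beta)(\mathbf{x})-q^{-2(t-z)}\tilde\beta Q^{-z}\big)e_{t-z}(\mathbf{x})$; (ii) $p^{\langle Q\rangle}_{k+t}(q;\beta)(\mathbf{x})=Q^{-1}p^{\langle Q\rangle}_{k+t-1}(q;\beta)(\mathbf{x})+\sum_{z=0}^{k-1}(-1)^{k-z+1}\big(p^{\langle Q\rangle}_{t+z}(q;\beta)(\mathbf{x})-Q^{-1}p^{\langle Q\rangle}_{t+z-1}(q;\beta)(\mathbf{x})\big)e_{k-z}(\mathbf{x})$, where $p^{\langle Q\rangle}_0(q;\beta)(\mathbf{x}):=\frac{1-(\beta q^k)^{-2}}{q-q^{-1}}$.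
   Context: $[t]=(q^t-q^{-t})/(q-q^{-1})$. $e_t$ is the elementary symmetric polynomial ($e_0=1$). For $t>0$, $p_t(q)(\mathbf{x})=\sum_{\lambda\vdash t,\ \ell(\lambda)\le k}q^{-\ell(\lambda)}(q-q^{-1})^{\ell(\lambda)-1}m_\lambda(\mathbf{x})$ ($\lambda$ partitions of $t$ with at most $k$ nonzero parts, $m_\lambda$ monomial symmetric polynomial), and $p^{\langle Q\rangle}_t(q;\beta)(\mathbf{x})=p_t(q)(\mathbf{x})+\tilde\beta Q^{-t}+(q-q^{-1})\sum_{z=1}^{t-1}\tilde\beta Q^{-t+z}p_z(q)(\mathbf{x})$. *)

theory Defs
  imports Complex_Main "HOL-Library.Multiset"
begin

(* Points x = (x_1,...,x_k) are functions nat => complex, using indices 0..k-1. *)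

definition qint :: "complex \<Rightarrow> nat \<Rightarrow> complex" where
  "qint q t = (q ^ t - inverse q ^ t) / (q - inverse q)"

definition esym :: "nat \<Rightarrow> nat \<Rightarrow> (nat \<Rightarrow> complex) \<Rightarrow> complex" where
  "esym k t x = (\<Sum>S\<in>{S. S \<subseteq> {0..<k} \<and> card S = t}. \<Prod>i\<in>S. x i)"

definition partitions_le :: "nat \<Rightarrow> nat \<Rightarrow> nat multiset set" where
  "partitions_le k t = {lam. 0 \<notin># lam \<and> sum_mset lam = t \<and> size lam \<le> k}"

(* monomial symmetric polynomial m_lam in k variables, evaluated at x:
   sum of x^alpha over all exponent vectors alpha that are rearrangements of lam *)
definition msym :: "nat \<Rightarrow> nat multiset \<Rightarrow> (nat \<Rightarrow> complex) \<Rightarrow> complex" where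
  "msym k lam x = (\<Sum>\<alpha>\<in>{\<alpha> :: nat \<Rightarrow> nat. (\<forall>i\<ge>k. \<alpha> i = 0) \<and>
        image_mset \<alpha> (mset_set {i\<in>{0..<k}. \<alpha> i \<noteq> 0}) = lam}.
      \<Prod>i<k. x i ^ \<alpha> i)"

(* p_t(q)(x) for t > 0 *)
definition pq :: "complex \<Rightarrow> nat \<Rightarrow> nat \<Rightarrow> (nat \<Rightarrow> complex) \<Rightarrow> complex" where
  "pq q k t x = (\<Sum>lam\<in>partitions_le k t.
      q powi (- int (size lam)) * (q - inverse q) ^ (size lam - 1) * msym k lam x)"

definition beta_tilde :: "complex \<Rightarrow> complex \<Rightarrow> complex" where
  "beta_tilde q \<beta> = (1 - \<beta> powi (-2)) / (q - inverse q)"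

(* p^<Q>_t(q;beta)(x); for t = 0 the convention of part (ii) *)
definition pQ :: "complex \<Rightarrow> complex \<Rightarrow> complex \<Rightarrow> nat \<Rightarrow> nat \<Rightarrow> (nat \<Rightarrow> complex) \<Rightarrow> complex" where
  "pQ Q q \<beta> k t x =
    (if t = 0 then (1 - (\<beta> * q ^ k) powi (-2)) / (q - inverse q)
     else pq q k t x + beta_tilde q \<beta> * Q powi (- int t)
          + (q - inverse q) * (\<Sum>z=1..t-1. beta_tilde q \<beta> * Q powi (- int t + int z) * pq q k z x))"

end

(*
  Write s = q^-2, D = q - q^-1 and E_s(z) = prod_i (1 - s x_i z) = sum_t (-s)^t e_t z^t.
  Expanding every factor (1 - s x_i z) / (1 - x_i z) = 1 + (1 - s) sum_{a>0} x_i^a z^a and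
  collecting monomials by the multiset of their nonzero exponents gives
  1 + D sum_{t>0} p_t z^t = E_s(z) / E_1(z).  The series of the p^<Q>_t is that of the p_t
  convolved with the geometric series R(z) = sum_{i>0} Q^-i z^i, whence
    D P^<Q>(z) E_1(z) = E_s(z) - E_1(z) + D beta~ R(z) E_s(z),
  and comparing coefficients of z^t gives (i).  Multiplying by 1 - z/Q turns R(z) into z/Q;
  once the constant term p_0 is added, the right-hand side becomes a polynomial of degree
  k + 1 whose leading coefficient vanishes precisely for the chosen value of p_0.  Hence the
  coefficient of z^(k+t) in E_1(z) (1 - z/Q) sum_i p^<Q>_i z^i is zero, which is (ii).
*)
theory Submission
  imports Defs "HOL-Computational_Algebra.Formal_Power_Series"
begin

unbundle fps_syntax

lemma power_int_minus_of_nat: "(z :: 'a :: field) powi (- int n) = inverse z ^ n"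
  by (simp add: power_int_minus power_inverse)

lemma fps_mult_nth_pos:
  fixes f g :: "'a :: comm_semiring_1 fps"
  assumes "f $ 0 = 0" and "0 < n"
  shows "(f * g) $ n = f $ n * g $ 0 + (\<Sum>i=1..n-1. f $ i * g $ (n - i))"
proof -
  obtain m where n: "n = Suc m" using assms(2) by (cases n) auto
  have "(f * g) $ n = (\<Sum>i=0..Suc m. f $ i * g $ (n - i))" by (simp add: fps_mult_nth n)
  also have "\<dots> = (\<Sum>i=1..m. f $ i * g $ (n - i)) + f $ n * g $ 0"
    using assms(1) by (simp add: sum.atLeast_Suc_atMost n)
  finally show ?thesis by (simp add: n add.commute)
qed

section \<open>Elementary symmetric polynomials\<close>

lemma esym_0 [simp]: "esym k 0 x = 1"
proof -
  have "{S. S \<subseteq> {0..<k} \<and> card S = 0} = {{}}"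
    using finite_subset[OF _ finite_atLeastLessThan] by auto
  then show ?thesis by (simp add: esym_def)
qed

lemma esym_eq_0: "k < t \<Longrightarrow> esym k t x = 0"
proof -
  assume "k < t"
  moreover have "card S \<le> k" if "S \<subseteq> {0..<k}" for S :: "nat set"
    using card_mono[OF finite_atLeastLessThan that] by simp
  ultimately have no_subsets: "{S. S \<subseteq> {0..<k} \<and> card S = t} = {}"
    by (auto dest: leD)
  show ?thesis unfolding esym_def no_subsets by simp
qed

lemma card_subsets_atLeastLessThan_Suc:
  "{S. S \<subseteq> {0..<Suc k} \<and> card S = Suc t}
    = {S. S \<subseteq> {0..<k} \<and> card S = Suc t} \<union> insert k ` {S. S \<subseteq> {0..<k} \<and> card S = t}"
    (is "?S (Suc k) (Suc t) = ?S k (Suc t) \<union> insert k ` ?S k t")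
proof (intro equalityI subsetI)
  fix S assume S: "S \<in> ?S (Suc k) (Suc t)"
  then have "finite S" using finite_subset by blast
  show "S \<in> ?S k (Suc t) \<union> insert k ` ?S k t"
  proof (cases "k \<in> S")
    case True
    then have "S - {k} \<in> ?S k t"
      using S \<open>finite S\<close> by (auto simp: less_Suc_eq)
    moreover have "S = insert k (S - {k})" using True by blast
    ultimately show ?thesis by blast
  qed (use S in \<open>auto simp: less_Suc_eq\<close>)
next
  fix S assume "S \<in> ?S k (Suc t) \<union> insert k ` ?S k t"
  then consider "S \<in> ?S k (Suc t)" | T where "T \<in> ?S k t" "S = insert k T" by blast
  then show "S \<in> ?S (Suc k) (Suc t)"
  proof cases
    case 2
    moreover have "finite T" and "k \<notin> T" using 2 finite_subset by auto
    ultimately show ?thesis by auto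
  qed auto
qed

lemma esym_Suc_Suc: "esym (Suc k) (Suc t) x = esym k (Suc t) x + x k * esym k t x"
proof -
  let ?S = "\<lambda>m. {S. S \<subseteq> {0..<k} \<and> card S = m}"
  have k_notin: "k \<notin> T" if "T \<in> ?S m" for T m
    using that by auto
  have "inj_on (insert k) (?S t)"
    using k_notin by (intro inj_onI) (metis insert_ident)
  moreover have "(\<Prod>i\<in>insert k T. x i) = x k * (\<Prod>i\<in>T. x i)" if "T \<in> ?S t" for T
    using that k_notin finite_subset[of T "{0..<k}"] by simp
  ultimately have image_sum: "(\<Sum>T\<in>insert k ` ?S t. \<Prod>i\<in>T. x i) = x k * esym k t x"
    by (simp add: sum.reindex esym_def sum_distrib_left)
  have "finite (?S m)" for m
    by (rule finite_subset[of _ "Pow {0..<k}"]) auto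
  moreover have "?S (Suc t) \<inter> insert k ` ?S t = {}" using k_notin by blast
  ultimately have "esym (Suc k) (Suc t) x = esym k (Suc t) x + (\<Sum>T\<in>insert k ` ?S t. \<Prod>i\<in>T. x i)"
    unfolding esym_def card_subsets_atLeastLessThan_Suc by (intro sum.union_disjoint) auto
  then show ?thesis by (simp only: image_sum)
qed

definition esym_fps :: "complex \<Rightarrow> (nat \<Rightarrow> complex) \<Rightarrow> nat \<Rightarrow> complex fps" where
  "esym_fps s x k = Abs_fps (\<lambda>t. (- s) ^ t * esym k t x)"

lemma esym_fps_nth: "esym_fps s x k $ t = (- s) ^ t * esym k t x"
  by (simp add: esym_fps_def)

lemma esym_fps_nth_eq_0: "k < n \<Longrightarrow> esym_fps s x k $ n = 0"
  by (simp add: esym_fps_nth esym_eq_0)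

lemma esym_fps_eq_prod: "esym_fps s x k = (\<Prod>i<k. 1 - fps_const (s * x i) * fps_X)"
proof (induction k)
  case 0
  have "esym_fps s x 0 $ t = 1 $ t" for t
    by (cases t) (simp_all add: esym_fps_def esym_eq_0)
  then show ?case by (simp add: fps_ext)
next
  case (Suc k)
  have "esym_fps s x (Suc k) = (1 - fps_const (s * x k) * fps_X) * esym_fps s x k"
  proof (rule fps_ext)
    fix t show "esym_fps s x (Suc k) $ t = ((1 - fps_const (s * x k) * fps_X) * esym_fps s x k) $ t"
      by (cases t) (simp_all add: esym_fps_def esym_Suc_Suc algebra_simps)
  qed
  then show ?case by (simp add: Suc.IH mult.commute)
qed

section \<open>Weighted complete homogeneous sums\<close>

definition monomial_exponents :: "nat \<Rightarrow> nat \<Rightarrow> (nat \<Rightarrow> nat) set" where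
  "monomial_exponents k t = {\<alpha>. (\<forall>i\<ge>k. \<alpha> i = 0) \<and> (\<Sum>i<k. \<alpha> i) = t}"

lemma monomial_exponents_le:
  assumes "\<alpha> \<in> monomial_exponents k t" and "i < k"
  shows "\<alpha> i \<le> t"
proof -
  have "\<alpha> i \<le> (\<Sum>i<k. \<alpha> i)" using assms(2) by (intro member_le_sum) auto
  then show ?thesis using assms(1) by (simp add: monomial_exponents_def)
qed

lemma finite_monomial_exponents: "finite (monomial_exponents k t)"
proof (rule finite_subset)
  show "monomial_exponents k t \<subseteq>
      {\<alpha>. \<forall>i. (i \<in> {..<k} \<longrightarrow> \<alpha> i \<in> {..t}) \<and> (i \<notin> {..<k} \<longrightarrow> \<alpha> i = 0)}"
    using monomial_exponents_le by (auto simp: monomial_exponents_def)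
qed (intro finite_set_of_finite_funs; simp)

lemma monomial_exponents_0: "monomial_exponents k 0 = {\<lambda>_. 0}"
proof (intro equalityI subsetI)
  fix \<alpha> assume \<alpha>: "\<alpha> \<in> monomial_exponents k 0"
  have "\<alpha> i = 0" for i
    using monomial_exponents_le[OF \<alpha>, of i] \<alpha> by (cases "i < k") (auto simp: monomial_exponents_def)
  then show "\<alpha> \<in> {\<lambda>_. 0}" by auto
qed (simp add: monomial_exponents_def)

definition hsym_weighted :: "complex \<Rightarrow> nat \<Rightarrow> nat \<Rightarrow> (nat \<Rightarrow> complex) \<Rightarrow> complex" where
  "hsym_weighted c k t x =
    (\<Sum>\<alpha>\<in>monomial_exponents k t. \<Prod>i<k. (if \<alpha> i = 0 then 1 else c) * x i ^ \<alpha> i)"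

lemma hsym_weighted_0 [simp]: "hsym_weighted c k 0 x = 1"
  by (simp add: hsym_weighted_def monomial_exponents_0)

lemma hsym_weighted_0_vars: "hsym_weighted c 0 t x = (if t = 0 then 1 else 0)"
proof -
  have "monomial_exponents 0 t = (if t = 0 then {\<lambda>_. 0} else {})"
    by (auto simp: monomial_exponents_def)
  then show ?thesis by (simp add: hsym_weighted_def)
qed

lemma hsym_weighted_Suc:
  "hsym_weighted c (Suc k) t x =
    (\<Sum>a=0..t. (if a = 0 then 1 else c) * x k ^ a * hsym_weighted c k (t - a) x)"
proof -
  define w where "w n \<alpha> = (\<Prod>i<n. (if \<alpha> i = 0 then 1 else c) * x i ^ \<alpha> i)" for n \<alpha>
  define f where "f a = (if a = 0 then 1 else c) * x k ^ a" for a
  have sum_upd: "(\<Sum>i<k. (\<beta>(k := a)) i) = (\<Sum>i<k. \<beta> i)" for \<beta> :: "nat \<Rightarrow> nat" and a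
    by (intro sum.cong) auto
  have w_upd: "w k (\<beta>(k := a)) = w k \<beta>" for \<beta> a
    unfolding w_def by (intro prod.cong) auto
  have split: "\<alpha> k \<le> t \<and> \<alpha>(k := 0) \<in> monomial_exponents k (t - \<alpha> k)"
    if "\<alpha> \<in> monomial_exponents (Suc k) t" for \<alpha>
    using that monomial_exponents_le[OF that, of k] by (auto simp: monomial_exponents_def sum_upd)
  have join: "\<beta>(k := a) \<in> monomial_exponents (Suc k) t"
    if "a \<le> t" and "\<beta> \<in> monomial_exponents k (t - a)" for a \<beta>
    using that by (auto simp: monomial_exponents_def sum_upd)
  have vanish: "\<beta> k = 0" if "\<beta> \<in> monomial_exponents k m" for \<beta> m
    using that by (simp add: monomial_exponents_def)
  have w_Suc: "w (Suc k) \<alpha> = f (\<alpha> k) * w k \<alpha>" for \<alpha>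
    by (simp add: w_def f_def)
  have "(\<Sum>a=0..t. f a * hsym_weighted c k (t - a) x)
      = (\<Sum>(a, \<beta>)\<in>Sigma {0..t} (\<lambda>a. monomial_exponents k (t - a)). f a * w k \<beta>)"
    by (simp add: hsym_weighted_def w_def sum_distrib_left sum.Sigma finite_monomial_exponents)
  also have "\<dots> = (\<Sum>\<alpha>\<in>monomial_exponents (Suc k) t. w (Suc k) \<alpha>)"
    by (rule sum.reindex_bij_witness[of _ "\<lambda>\<alpha>. (\<alpha> k, \<alpha>(k := 0))" "\<lambda>(a, \<beta>). \<beta>(k := a)"])
      (auto simp: split join vanish w_Suc w_upd)
  finally show ?thesis by (simp add: hsym_weighted_def w_def f_def)
qed

definition hsym_weighted_fps :: "complex \<Rightarrow> (nat \<Rightarrow> complex) \<Rightarrow> nat \<Rightarrow> complex fps" where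
  "hsym_weighted_fps c x k = Abs_fps (\<lambda>t. hsym_weighted c k t x)"

lemma hsym_weighted_fps_eq_prod:
  "hsym_weighted_fps c x k = (\<Prod>i<k. Abs_fps (\<lambda>a. (if a = 0 then 1 else c) * x i ^ a))"
proof (induction k)
  case 0
  show ?case by (simp add: hsym_weighted_fps_def hsym_weighted_0_vars fps_ext)
next
  case (Suc k)
  have "hsym_weighted_fps c x (Suc k)
      = Abs_fps (\<lambda>a. (if a = 0 then 1 else c) * x k ^ a) * hsym_weighted_fps c x k"
    by (simp add: fps_ext fps_mult_nth hsym_weighted_fps_def hsym_weighted_Suc)
  then show ?case by (simp add: Suc.IH mult.commute)
qed

lemma weighted_geometric_mult_linear:
  fixes s y :: complex
  shows "Abs_fps (\<lambda>a. (if a = 0 then 1 else 1 - s) * y ^ a) * (1 - fps_const y * fps_X)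
    = 1 - fps_const (s * y) * fps_X"
    (is "?G * _ = _")
proof -
  have "?G * (1 - fps_const y * fps_X) = ?G - fps_const y * (fps_X * ?G)"
    by (simp add: algebra_simps)
  also have "\<dots> = 1 - fps_const (s * y) * fps_X"
  proof (rule fps_ext)
    fix n show "(?G - fps_const y * (fps_X * ?G)) $ n = (1 - fps_const (s * y) * fps_X) $ n"
      by (cases n rule: nat.exhaust[case_product nat.exhaust]) (auto simp: algebra_simps)
  qed
  finally show ?thesis .
qed

lemma hsym_weighted_fps_mult_esym_fps:
  "hsym_weighted_fps (1 - s) x k * esym_fps 1 x k = esym_fps s x k"
  by (simp add: hsym_weighted_fps_eq_prod esym_fps_eq_prod weighted_geometric_mult_linear
      flip: prod.distrib)

section \<open>The polynomials p_t(q)\<close>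

lemma finite_partitions_le: "finite (partitions_le k t)"
proof (rule finite_subset)
  have "set_mset lam \<subseteq> {..t}" if "sum_mset lam = t" for lam :: "nat multiset"
  proof
    fix a assume "a \<in># lam"
    then obtain lam' where "lam = add_mset a lam'" by (blast dest: multi_member_split)
    then show "a \<in> {..t}" using that by auto
  qed
  then show "partitions_le k t \<subseteq> (\<Union>n\<le>k. multisets_of_size {..t} n)"
    by (auto simp: partitions_le_def multisets_of_size_def)
qed auto

definition exponent_shape :: "nat \<Rightarrow> (nat \<Rightarrow> nat) \<Rightarrow> nat multiset" where
  "exponent_shape k \<alpha> = image_mset \<alpha> (mset_set {i\<in>{0..<k}. \<alpha> i \<noteq> 0})"

lemma sum_mset_exponent_shape: "sum_mset (exponent_shape k \<alpha>) = (\<Sum>i<k. \<alpha> i)"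
proof -
  have "sum_mset (exponent_shape k \<alpha>) = sum \<alpha> {i\<in>{0..<k}. \<alpha> i \<noteq> 0}"
    by (simp add: exponent_shape_def sum_unfold_sum_mset)
  also have "\<dots> = (\<Sum>i<k. \<alpha> i)"
    by (rule sum.mono_neutral_left) auto
  finally show ?thesis .
qed

lemma exponent_shape_in_partitions_le:
  assumes "\<alpha> \<in> monomial_exponents k t"
  shows "exponent_shape k \<alpha> \<in> partitions_le k t"
proof -
  have "card {i\<in>{0..<k}. \<alpha> i \<noteq> 0} \<le> card {0..<k}"
    by (rule card_mono) auto
  then show ?thesis
    using assms sum_mset_exponent_shape[of k \<alpha>]
    by (auto simp: partitions_le_def monomial_exponents_def exponent_shape_def)
qed

lemma weighted_monomial_eq:
  "(\<Prod>i<k. (if \<alpha> i = 0 then 1 else c) * x i ^ \<alpha> i)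
    = c ^ size (exponent_shape k \<alpha>) * (\<Prod>i<k. x i ^ \<alpha> i)"
proof -
  let ?support = "{i\<in>{0..<k}. \<alpha> i \<noteq> 0}"
  have "(\<Prod>i<k. if \<alpha> i = 0 then 1 else c) = (\<Prod>i\<in>?support. if \<alpha> i = 0 then 1 else c)"
    by (rule prod.mono_neutral_right) auto
  also have "\<dots> = (\<Prod>i\<in>?support. c)"
    by (rule prod.cong) auto
  finally show ?thesis by (simp add: prod.distrib exponent_shape_def)
qed

lemma hsym_weighted_eq_sum_partitions:
  "hsym_weighted c k t x = (\<Sum>lam\<in>partitions_le k t. c ^ size lam * msym k lam x)"
proof -
  let ?w = "\<lambda>\<alpha>. \<Prod>i<k. (if \<alpha> i = 0 then 1 else c) * x i ^ \<alpha> i"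
  have "hsym_weighted c k t x
      = (\<Sum>lam\<in>partitions_le k t. \<Sum>\<alpha>\<in>{\<alpha> \<in> monomial_exponents k t. exponent_shape k \<alpha> = lam}. ?w \<alpha>)"
    unfolding hsym_weighted_def
    by (rule sum.group[symmetric, OF finite_monomial_exponents finite_partitions_le])
      (use exponent_shape_in_partitions_le in blast)
  also have "\<dots> = (\<Sum>lam\<in>partitions_le k t. c ^ size lam * msym k lam x)"
  proof (rule sum.cong[OF refl])
    fix lam assume "lam \<in> partitions_le k t"
    then have "{\<alpha> \<in> monomial_exponents k t. exponent_shape k \<alpha> = lam}
        = {\<alpha>. (\<forall>i\<ge>k. \<alpha> i = 0) \<and> exponent_shape k \<alpha> = lam}"
      using sum_mset_exponent_shape by (auto simp: monomial_exponents_def partitions_le_def)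
    then have "(\<Sum>\<alpha>\<in>{\<alpha> \<in> monomial_exponents k t. exponent_shape k \<alpha> = lam}. ?w \<alpha>)
        = (\<Sum>\<alpha>\<in>{\<alpha>. (\<forall>i\<ge>k. \<alpha> i = 0) \<and> exponent_shape k \<alpha> = lam}.
            c ^ size lam * (\<Prod>i<k. x i ^ \<alpha> i))"
      by (auto simp: weighted_monomial_eq intro!: sum.cong)
    then show "(\<Sum>\<alpha>\<in>{\<alpha> \<in> monomial_exponents k t. exponent_shape k \<alpha> = lam}. ?w \<alpha>)
        = c ^ size lam * msym k lam x"
      by (simp add: msym_def sum_distrib_left exponent_shape_def)
  qed
  finally show ?thesis .
qed

lemma pq_eq_hsym_weighted:
  assumes "q \<noteq> 0" and "0 < t"
  shows "(q - inverse q) * pq q k t x = hsym_weighted (1 - inverse q ^ 2) k t x"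
proof -
  have coefficient: "(q - inverse q) * (q powi (- int n) * (q - inverse q) ^ (n - 1))
      = (1 - inverse q ^ 2) ^ n" if "0 < n" for n
  proof -
    have "(q - inverse q) * (q powi (- int n) * (q - inverse q) ^ (n - 1))
        = (inverse q * (q - inverse q)) ^ n"
      using that by (simp add: power_int_minus power_inverse power_mult_distrib power_Suc[symmetric]
          del: power_Suc)
    also have "inverse q * (q - inverse q) = 1 - inverse q ^ 2"
      using assms(1) by (simp add: field_simps power2_eq_square)
    finally show ?thesis .
  qed
  have "0 < size lam" if "lam \<in> partitions_le k t" for lam
  proof -
    have "lam \<noteq> {#}" using that assms(2) by (auto simp: partitions_le_def)
    then show ?thesis by (simp add: nonempty_has_size)
  qed
  then have "(q - inverse q) * pq q k t x
      = (\<Sum>lam\<in>partitions_le k t. (1 - inverse q ^ 2) ^ size lam * msym k lam x)"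
    unfolding pq_def sum_distrib_left by (intro sum.cong) (simp_all flip: coefficient mult.assoc)
  then show ?thesis by (simp add: hsym_weighted_eq_sum_partitions)
qed

definition pq_fps :: "complex \<Rightarrow> nat \<Rightarrow> (nat \<Rightarrow> complex) \<Rightarrow> complex fps" where
  "pq_fps q k x = Abs_fps (\<lambda>t. if t = 0 then 0 else pq q k t x)"

lemma pq_fps_mult_esym_fps:
  assumes "q \<noteq> 0"
  shows "fps_const (q - inverse q) * pq_fps q k x * esym_fps 1 x k
    = esym_fps (inverse q ^ 2) x k - esym_fps 1 x k"
proof -
  have "hsym_weighted_fps (1 - inverse q ^ 2) x k = 1 + fps_const (q - inverse q) * pq_fps q k x"
    by (rule fps_ext) (simp add: hsym_weighted_fps_def pq_fps_def pq_eq_hsym_weighted[OF assms])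
  with hsym_weighted_fps_mult_esym_fps[of "inverse q ^ 2" x k] show ?thesis
    by (simp add: algebra_simps)
qed

section \<open>The polynomials p^<Q>_t(q; beta) and their recurrences\<close>

definition inverse_powers_fps :: "complex \<Rightarrow> complex fps" where
  "inverse_powers_fps Q = Abs_fps (\<lambda>i. if i = 0 then 0 else inverse Q ^ i)"

lemma inverse_powers_fps_mult_linear:
  "(1 - fps_const (inverse Q) * fps_X) * inverse_powers_fps Q = fps_const (inverse Q) * fps_X"
    (is "?L * ?R = _")
proof -
  have "?L * ?R = ?R - fps_const (inverse Q) * (fps_X * ?R)"
    by (simp add: algebra_simps)
  also have "\<dots> = fps_const (inverse Q) * fps_X"
  proof (rule fps_ext)
    fix n show "(?R - fps_const (inverse Q) * (fps_X * ?R)) $ n = (fps_const (inverse Q) * fps_X) $ n"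
      by (cases n rule: nat.exhaust[case_product nat.exhaust])
        (auto simp: inverse_powers_fps_def)
  qed
  finally show ?thesis .
qed

definition pQ_fps :: "complex \<Rightarrow> complex \<Rightarrow> complex \<Rightarrow> nat \<Rightarrow> (nat \<Rightarrow> complex) \<Rightarrow> complex fps" where
  "pQ_fps Q q \<beta> k x = Abs_fps (\<lambda>t. if t = 0 then 0 else pQ Q q \<beta> k t x)"

lemma pQ_fps_eq:
  "pQ_fps Q q \<beta> k x = pq_fps q k x
      * (1 + fps_const ((q - inverse q) * beta_tilde q \<beta>) * inverse_powers_fps Q)
    + fps_const (beta_tilde q \<beta>) * inverse_powers_fps Q"
proof (rule fps_ext)
  fix t
  define b where "b = beta_tilde q \<beta>"
  define P R where "P = pq_fps q k x" and "R = inverse_powers_fps Q"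
  have "P * (1 + fps_const ((q - inverse q) * b) * R) + fps_const b * R
      = P + fps_const ((q - inverse q) * b) * (P * R) + fps_const b * R"
    by (simp add: algebra_simps)
  then have "(P * (1 + fps_const ((q - inverse q) * b) * R) + fps_const b * R) $ t
      = P $ t + (q - inverse q) * b * (P * R) $ t + b * R $ t"
    by simp
  moreover have "pQ_fps Q q \<beta> k x $ t = P $ t + (q - inverse q) * b * (P * R) $ t + b * R $ t"
  proof (cases "t = 0")
    case False
    have "(\<Sum>z=1..t-1. b * Q powi (- int t + int z) * pq q k z x)
        = b * (\<Sum>z=1..t-1. pq q k z x * inverse Q ^ (t - z))"
      unfolding sum_distrib_left
    proof (rule sum.cong[OF refl])
      fix z assume "z \<in> {1..t-1}"
      then have "- int t + int z = - int (t - z)" by auto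
      then have "Q powi (- int t + int z) = inverse Q ^ (t - z)"
        by (simp only: power_int_minus_of_nat)
      then show "b * Q powi (- int t + int z) * pq q k z x = b * (pq q k z x * inverse Q ^ (t - z))"
        by simp
    qed
    moreover have "(P * R) $ t = (\<Sum>z=1..t-1. pq q k z x * inverse Q ^ (t - z))"
      using False
      by (auto simp: fps_mult_nth_pos P_def R_def pq_fps_def inverse_powers_fps_def intro!: sum.cong)
    ultimately show ?thesis
      using False
      by (simp add: pQ_fps_def pQ_def P_def R_def b_def pq_fps_def inverse_powers_fps_def
          power_int_minus_of_nat mult.assoc)
  qed (simp add: pQ_fps_def P_def R_def pq_fps_def inverse_powers_fps_def)
  ultimately show "pQ_fps Q q \<beta> k x $ t = (P * (1 + fps_const ((q - inverse q) * b) * R)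
      + fps_const b * R) $ t"
    by simp
qed

lemma pQ_fps_mult_esym_fps:
  assumes "q \<noteq> 0"
  shows "fps_const (q - inverse q) * pQ_fps Q q \<beta> k x * esym_fps 1 x k
    = esym_fps (inverse q ^ 2) x k - esym_fps 1 x k
      + fps_const ((q - inverse q) * beta_tilde q \<beta>) * inverse_powers_fps Q * esym_fps (inverse q ^ 2) x k"
proof -
  define D B c P R E Es where "D = fps_const (q - inverse q)" and "B = fps_const (beta_tilde q \<beta>)"
    and "c = fps_const ((q - inverse q) * beta_tilde q \<beta>)" and "P = pq_fps q k x"
    and "R = inverse_powers_fps Q" and "E = esym_fps 1 x k" and "Es = esym_fps (inverse q ^ 2) x k"
  have "D * pQ_fps Q q \<beta> k x * E = (D * P * E) * (1 + c * R) + (D * B) * R * E"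
    unfolding pQ_fps_eq P_def[symmetric] R_def[symmetric] B_def[symmetric] c_def[symmetric]
    by (simp add: algebra_simps)
  also have "\<dots> = (Es - E) * (1 + c * R) + c * R * E"
    using pq_fps_mult_esym_fps[OF assms] by (simp add: D_def B_def c_def P_def E_def Es_def)
  also have "\<dots> = Es - E + c * R * Es"
    by (simp add: algebra_simps)
  finally show ?thesis by (simp only: D_def c_def R_def E_def Es_def)
qed

lemma qint_coefficient:
  assumes "q \<noteq> 0" and "0 < t"
  shows "(-1) ^ (t - 1) * q powi (- int t) * qint q t
    = ((- (inverse q ^ 2)) ^ t - (-1) ^ t) / (q - inverse q)"
proof -
  have sign: "(-1) ^ (t - 1) = - ((-1) ^ t :: complex)"
    using assms(2) by (cases t) auto
  have inverse: "q ^ t * inverse q ^ t = 1"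
    using assms(1) by (simp flip: power_mult_distrib)
  have square: "(- (inverse q ^ 2)) ^ t = (-1) ^ t * (inverse q ^ t * inverse q ^ t)"
    unfolding power_minus[of "inverse q ^ 2"] by (simp add: power2_eq_square power_mult_distrib)
  have "(-1) ^ (t - 1) * q powi (- int t) * qint q t
      = (-1) ^ (t - 1) * inverse q ^ t * (q ^ t - inverse q ^ t) / (q - inverse q)"
    by (simp add: qint_def power_int_minus_of_nat)
  also have "(-1) ^ (t - 1) * inverse q ^ t * (q ^ t - inverse q ^ t)
      = (- (inverse q ^ 2)) ^ t - (-1) ^ t"
    unfolding sign square using inverse by (simp add: algebra_simps)
  finally show ?thesis .
qed

lemma pQ_0_coefficient:
  assumes "q - inverse q \<noteq> 0"
  shows "(q - inverse q) * pQ Q q \<beta> k 0 x = 1 - inverse \<beta> ^ 2 * (inverse q ^ 2) ^ k"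
proof -
  have "(\<beta> * q ^ k) powi (-2) = inverse \<beta> ^ 2 * (inverse q ^ 2) ^ k"
    using power_int_minus_of_nat[of "\<beta> * q ^ k" 2]
    by (simp add: power_mult_distrib power_inverse mult.commute[of k 2] flip: power_mult)
  then show ?thesis using assms by (simp add: pQ_def)
qed

lemma beta_tilde_coefficient:
  assumes "q - inverse q \<noteq> 0"
  shows "(q - inverse q) * beta_tilde q \<beta> = 1 - inverse \<beta> ^ 2"
  using assms power_int_minus_of_nat[of \<beta> 2] by (simp add: beta_tilde_def)

lemma pQ_convolution_esym:
  assumes "q \<noteq> 0" and "0 < t"
  defines "s \<equiv> inverse q ^ 2"
  shows "(q - inverse q) * (pQ Q q \<beta> k t x
            + (\<Sum>z=1..t-1. pQ Q q \<beta> k z x * ((-1) ^ (t - z) * esym k (t - z) x)))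
    = ((- s) ^ t - (-1) ^ t) * esym k t x
      + (q - inverse q) * (beta_tilde q \<beta>
          * (inverse Q ^ t + (\<Sum>z=1..t-1. inverse Q ^ z * ((- s) ^ (t - z) * esym k (t - z) x))))"
proof -
  have "(q - inverse q) * (pQ_fps Q q \<beta> k x * esym_fps 1 x k) $ t
      = esym_fps s x k $ t - esym_fps 1 x k $ t
        + (q - inverse q) * beta_tilde q \<beta> * (inverse_powers_fps Q * esym_fps s x k) $ t"
    unfolding s_def using arg_cong[OF pQ_fps_mult_esym_fps[OF assms(1)], of "\<lambda>f. f $ t"]
    by (simp only: mult.assoc fps_mult_left_const_nth fps_add_nth fps_sub_nth)
  moreover have "(pQ_fps Q q \<beta> k x * esym_fps 1 x k) $ t = pQ Q q \<beta> k t x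
      + (\<Sum>z=1..t-1. pQ Q q \<beta> k z x * ((-1) ^ (t - z) * esym k (t - z) x))"
    using assms(2) by (auto simp: fps_mult_nth_pos pQ_fps_def esym_fps_nth intro!: sum.cong)
  moreover have "(inverse_powers_fps Q * esym_fps s x k) $ t
      = inverse Q ^ t + (\<Sum>z=1..t-1. inverse Q ^ z * ((- s) ^ (t - z) * esym k (t - z) x))"
    using assms(2)
    by (auto simp: fps_mult_nth_pos inverse_powers_fps_def esym_fps_nth intro!: sum.cong)
  ultimately show ?thesis
    by (simp add: esym_fps_nth left_diff_distrib mult.assoc)
qed

(* The value of p_0 is chosen exactly so that this relation holds. *)
lemma beta_tilde_pQ_0_relation:
  assumes "q - inverse q \<noteq> 0"
  defines "s \<equiv> inverse q ^ 2"
  shows "(q - inverse q) * beta_tilde q \<beta> * (- s) ^ k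
    = (q - inverse q) * pQ Q q \<beta> k 0 x * (-1) ^ k + (- s) ^ k - (-1) ^ k"
proof -
  have "((q - inverse q) * beta_tilde q \<beta>) * ((-1) ^ k * s ^ k)
      = ((q - inverse q) * pQ Q q \<beta> k 0 x) * (-1) ^ k + (-1) ^ k * s ^ k - (-1) ^ k"
    unfolding pQ_0_coefficient[OF assms(1)] beta_tilde_coefficient[OF assms(1)] s_def
    by (simp add: algebra_simps)
  then show ?thesis
    by (simp add: power_minus[of s] mult.assoc)
qed

lemma pQ_newton_identity:
  assumes q: "q \<noteq> 0" and D: "q - inverse q \<noteq> 0" and t: "0 < t"
  shows "pQ Q q \<beta> k t x =
           (-1) ^ (t - 1) * q powi (- int t) * qint q t * esym k t x
           + beta_tilde q \<beta> * Q powi (- int t)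
           + (\<Sum>z=1..t-1. (-1) ^ (t - z + 1) *
               (pQ Q q \<beta> k z x - q powi (-2 * int (t - z)) * beta_tilde q \<beta> * Q powi (- int z))
               * esym k (t - z) x)"
proof -
  define d s b where "d = q - inverse q" and "s = inverse q ^ 2" and "b = beta_tilde q \<beta>"
  define p e where "p z = pQ Q q \<beta> k z x" and "e j = esym k j x" for z j
  define A where "A = (\<Sum>z=1..t-1. p z * ((-1) ^ (t - z) * e (t - z)))"
  define B where "B = (\<Sum>z=1..t-1. inverse Q ^ z * ((- s) ^ (t - z) * e (t - z)))"
  have "d * (p t + A) = ((- s) ^ t - (-1) ^ t) * e t + d * (b * (inverse Q ^ t + B))"
    using pQ_convolution_esym[OF q t, of Q \<beta> k x]
    by (simp add: d_def s_def b_def p_def e_def A_def B_def)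
  then have "p t + A = ((- s) ^ t - (-1) ^ t) * e t / d + b * (inverse Q ^ t + B)"
    using D unfolding d_def[symmetric] by (simp add: field_simps)
  then have "p t = ((- s) ^ t - (-1) ^ t) / d * e t + b * inverse Q ^ t + (b * B - A)"
    by (simp add: algebra_simps)
  moreover have "(\<Sum>z=1..t-1. (-1) ^ (t - z + 1) *
               (p z - q powi (-2 * int (t - z)) * b * Q powi (- int z)) * e (t - z))
      = b * B - A"
  proof -
    have "(-1) ^ (t - z + 1) * (p z - q powi (-2 * int (t - z)) * b * Q powi (- int z)) * e (t - z)
        = b * (inverse Q ^ z * ((- s) ^ (t - z) * e (t - z))) - p z * ((-1) ^ (t - z) * e (t - z))"
      for z
    proof -
      have "q powi (-2 * int (t - z)) = s ^ (t - z)"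
        using power_int_minus_of_nat[of q "2 * (t - z)"] by (simp add: s_def power_mult)
      then show ?thesis
        by (simp add: power_int_minus_of_nat power_minus[of s] algebra_simps)
    qed
    then show ?thesis
      by (simp add: A_def B_def sum_subtractf sum_distrib_left)
  qed
  ultimately show ?thesis
    using qint_coefficient[OF q t] by (simp add: p_def e_def b_def s_def d_def power_int_minus_of_nat)
qed

lemma esym_fps_mult_pQ_difference:
  fixes q Q \<beta> :: complex and k :: nat and x :: "nat \<Rightarrow> complex"
  assumes "q \<noteq> 0"
  defines "d \<equiv> q - inverse q" and "L \<equiv> 1 - fps_const (inverse Q) * fps_X"
    and "E \<equiv> esym_fps 1 x k" and "Es \<equiv> esym_fps (inverse q ^ 2) x k"
  shows "fps_const d * (E * (L * Abs_fps (\<lambda>i. pQ Q q \<beta> k i x)))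
    = L * (fps_const (d * pQ Q q \<beta> k 0 x) * E + Es - E)
      + fps_const (d * beta_tilde q \<beta> * inverse Q) * (fps_X * Es)"
proof -
  define b p0 R P where "b = beta_tilde q \<beta>" and "p0 = pQ Q q \<beta> k 0 x"
    and "R = inverse_powers_fps Q" and "P = pQ_fps Q q \<beta> k x"
  have P0: "Abs_fps (\<lambda>i. pQ Q q \<beta> k i x) = fps_const p0 + P"
    by (rule fps_ext) (simp add: P_def pQ_fps_def p0_def)
  have PE: "fps_const d * P * E = Es - E + fps_const d * fps_const b * R * Es"
    using pQ_fps_mult_esym_fps[OF assms(1), of Q \<beta> k x]
    by (simp add: d_def P_def E_def Es_def b_def R_def)
  have "fps_const d * (E * (L * (fps_const p0 + P)))
      = L * (fps_const d * fps_const p0 * E) + L * (fps_const d * P * E)"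
    by (simp only: algebra_simps)
  also have "\<dots> = L * (fps_const (d * p0) * E + Es - E) + fps_const d * fps_const b * (L * R) * Es"
    unfolding PE by (simp add: algebra_simps)
  also have "\<dots> = L * (fps_const (d * p0) * E + Es - E) + fps_const (d * b * inverse Q) * (fps_X * Es)"
    unfolding L_def R_def inverse_powers_fps_mult_linear by (simp add: mult_ac)
  finally show ?thesis by (simp only: P0 p0_def b_def)
qed

lemma esym_fps_mult_pQ_difference_nth_eq_0:
  assumes q: "q \<noteq> 0" and D: "q - inverse q \<noteq> 0" and n: "k < n"
  shows "(esym_fps 1 x k * ((1 - fps_const (inverse Q) * fps_X) * Abs_fps (\<lambda>i. pQ Q q \<beta> k i x))) $ n
    = 0"
proof -
  define d s b p0 where "d = q - inverse q" and "s = inverse q ^ 2" and "b = beta_tilde q \<beta>"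
    and "p0 = pQ Q q \<beta> k 0 x"
  define L E Es where "L = 1 - fps_const (inverse Q) * fps_X" and "E = esym_fps 1 x k"
    and "Es = esym_fps s x k"
  define Y where "Y = fps_const (d * p0) * E + Es - E"
  have "fps_const d * (E * (L * Abs_fps (\<lambda>i. pQ Q q \<beta> k i x)))
      = L * Y + fps_const (d * b * inverse Q) * (fps_X * Es)"
    unfolding d_def L_def E_def Es_def Y_def s_def b_def p0_def
    by (rule esym_fps_mult_pQ_difference[OF q])
  from arg_cong[OF this, of "\<lambda>f. f $ n"]
  have "d * (E * (L * Abs_fps (\<lambda>i. pQ Q q \<beta> k i x))) $ n
      = (L * Y + fps_const (d * b * inverse Q) * (fps_X * Es)) $ n"
    by (simp only: fps_mult_left_const_nth)
  also have "\<dots> = - inverse Q * Y $ (n - 1) + d * b * inverse Q * Es $ (n - 1)"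
    using n by (simp add: L_def Y_def Es_def E_def esym_fps_nth_eq_0 algebra_simps)
  also have "\<dots> = 0"
  proof (cases "n - 1 = k")
    case True
    have "- inverse Q * Y $ k + d * b * inverse Q * Es $ k
        = inverse Q * esym k k x * (d * b * (- s) ^ k - (d * p0 * (-1) ^ k + (- s) ^ k - (-1) ^ k))"
      by (simp add: Y_def Es_def E_def esym_fps_nth algebra_simps)
    also have "\<dots> = 0"
      using beta_tilde_pQ_0_relation[OF D, of \<beta> k Q x] by (simp add: d_def b_def p0_def s_def)
    finally show ?thesis using True by simp
  qed (use n in \<open>simp add: Y_def Es_def E_def esym_fps_nth_eq_0\<close>)
  finally show ?thesis
    using D by (simp add: d_def E_def L_def)
qed

lemma pQ_newton_identity_high:
  assumes q: "q \<noteq> 0" and D: "q - inverse q \<noteq> 0" and k: "0 < k" and t: "0 < t"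
  shows "pQ Q q \<beta> k (k + t) x =
           inverse Q * pQ Q q \<beta> k (k + t - 1) x
           + (\<Sum>z=0..k-1. (-1) ^ (k - z + 1) *
               (pQ Q q \<beta> k (t + z) x - inverse Q * pQ Q q \<beta> k (t + z - 1) x)
               * esym k (k - z) x)"
proof -
  define S where "S = (\<Sum>z=0..k-1. (-1) ^ (k - z + 1) *
               (pQ Q q \<beta> k (t + z) x - inverse Q * pQ Q q \<beta> k (t + z - 1) x)
               * esym k (k - z) x)"
  define p where "p = (\<lambda>i. pQ Q q \<beta> k i x)"
  define V where "V = (1 - fps_const (inverse Q) * fps_X) * Abs_fps p"
  define E where "E = esym_fps 1 x k"
  have V_nth: "V $ j = p j - inverse Q * p (j - 1)" if "0 < j" for j
  proof -
    have "V = Abs_fps p - fps_const (inverse Q) * (fps_X * Abs_fps p)"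
      by (simp add: V_def algebra_simps)
    then show ?thesis using that by simp
  qed
  have "0 = (E * V) $ (k + t)"
    using esym_fps_mult_pQ_difference_nth_eq_0[OF q D, of k "k + t"] t
    by (simp add: E_def V_def p_def)
  also have "\<dots> = (\<Sum>i=0..k. E $ i * V $ (k + t - i))"
    unfolding fps_mult_nth
    by (rule sum.mono_neutral_right) (auto simp: E_def esym_fps_nth_eq_0)
  also have "\<dots> = V $ (k + t) + (\<Sum>i=1..k. E $ i * V $ (k + t - i))"
    by (simp add: sum.atLeast_Suc_atMost E_def esym_fps_nth)
  also have "(\<Sum>i=1..k. E $ i * V $ (k + t - i)) = - S"
    unfolding S_def sum_negf[symmetric]
  proof (rule sum.reindex_bij_witness[of _ "\<lambda>z. k - z" "\<lambda>i. k - i"])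
    fix i assume "i \<in> {1..k}"
    then have "k - (k - i) = i" and "t + (k - i) = k + t - i" by auto
    then show "- ((-1) ^ (k - (k - i) + 1) * (pQ Q q \<beta> k (t + (k - i)) x
          - inverse Q * pQ Q q \<beta> k (t + (k - i) - 1) x) * esym k (k - (k - i)) x)
        = E $ i * V $ (k + t - i)"
      using t by (simp add: E_def esym_fps_nth V_nth p_def)
  qed (use k in auto)
  finally show ?thesis
    unfolding S_def[symmetric] using V_nth[of "k + t"] t by (simp add: p_def algebra_simps)
qed

lemma diff_inverse_nonzero:
  fixes q :: "'a :: field"
  assumes "q \<noteq> 0" and "q ^ 2 \<noteq> 1"
  shows "q - inverse q \<noteq> 0"
proof
  assume "q - inverse q = 0"
  then have "q ^ 2 = q * inverse q" by (simp add: power2_eq_square)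
  also have "\<dots> = 1" using assms(1) by simp
  finally show False using assms(2) by simp
qed

theorem mainTheorem20:
  fixes q Q \<beta> :: complex and k t :: nat and x :: "nat \<Rightarrow> complex"
  assumes "q \<noteq> 0" and "\<forall>n>0. q ^ n \<noteq> 1"
    and "k > 0" and "t > 0" and "Q \<noteq> 0" and "\<beta> \<noteq> 0"
  shows "(pQ Q q \<beta> k t x =
           (-1) ^ (t - 1) * q powi (- int t) * qint q t * esym k t x
           + beta_tilde q \<beta> * Q powi (- int t)
           + (\<Sum>z=1..t-1. (-1) ^ (t - z + 1) *
               (pQ Q q \<beta> k z x - q powi (-2 * int (t - z)) * beta_tilde q \<beta> * Q powi (- int z))
               * esym k (t - z) x))
    \<and> (pQ Q q \<beta> k (k + t) x =
           inverse Q * pQ Q q \<beta> k (k + t - 1) x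
           + (\<Sum>z=0..k-1. (-1) ^ (k - z + 1) *
               (pQ Q q \<beta> k (t + z) x - inverse Q * pQ Q q \<beta> k (t + z - 1) x)
               * esym k (k - z) x))"
proof -
  have D: "q - inverse q \<noteq> 0"
    using assms(2) by (intro diff_inverse_nonzero[OF assms(1)]) simp
  show ?thesis
    by (rule conjI[OF pQ_newton_identity[OF assms(1) D assms(4)]
          pQ_newton_identity_high[OF assms(1) D assms(3,4)]])
qed

end
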